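(* Let $X$ be a completely subscalable nonnegative random variable and let $g : [0,\infty) \to [0,\infty)$ be an increasing (non-decreasing) convex function with $g(0) = 0$. Then the random variable $Y := g(X)$ is completely subscalable.
   Context: A nonnegative random variable $X$ with survival function $\overline{F}(x)=\mathbb{P}(X>x)$ is called completely subscalable if $\theta \, \overline{F}(x) \leq \overline{F}(x/\theta)$ for all $x \geq 0$ and all $\theta \in (0,1)$. *)

theory Defs
  imports "HOL-Probability.Probability"
begin

definition completely_subscalable :: "'a measure \<Rightarrow> ('a \<Rightarrow> real) \<Rightarrow> bool" where
  "completely_subscalable M X \<longleftrightarrow>
     X \<in> borel_measurable M \<and> (\<forall>\<omega>\<in>space M. 0 \<le> X \<omega>) \<and>
     (\<forall>x::real. \<forall>\<theta>::real. 0 \<le> x \<and> 0 < \<theta> \<and> \<theta> < 1 \<longrightarrow>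
        \<theta> * measure M {\<omega>\<in>space M. X \<omega> > x} \<le> measure M {\<omega>\<in>space M. X \<omega> > x / \<theta>})"

end

theory Submission
  imports Defs
begin

text \<open>For y \<ge> 0 the event g(X) > y is an event X > x0: g is monotone, and it is
  continuous on (0,\<infinity>) by convexity, so its strict superlevel sets are open rays.
  Convexity and g(0) = 0 also give g(\<theta> x) \<le> \<theta> g(x), whence X > x0/\<theta> implies
  g(X) > y/\<theta>. Subscalability of X at x0 therefore transfers to g(X) at y.\<close>

lemma convex_on_nonneg_scale_le:
  fixes g :: "real \<Rightarrow> real"
  assumes "convex_on {0..} g" "g 0 \<le> 0" "0 \<le> t" "t \<le> 1" "0 \<le> x"
  shows "g (t * x) \<le> t * g x"
proof -
  have "g ((1 - t) *\<^sub>R 0 + t *\<^sub>R x) \<le> (1 - t) * g 0 + t * g x"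
    using assms by (intro convex_onD) auto
  moreover have "(1 - t) * g 0 \<le> 0"
    using assms by (simp add: mult_nonneg_nonpos)
  ultimately show ?thesis
    by simp
qed

lemma mono_on_superlevel_set_eq_greaterThan:
  fixes g :: "real \<Rightarrow> real"
  assumes mono: "mono_on {0..} g" and cont: "continuous_on {0<..} g"
    and "g 0 \<le> y" "0 \<le> a" "y < g a"
  obtains x\<^sub>0 where "0 \<le> x\<^sub>0" "\<And>x. 0 \<le> x \<Longrightarrow> y < g x \<longleftrightarrow> x\<^sub>0 < x"
proof
  define S where "S = {x. 0 \<le> x \<and> y < g x}"
  have S_eq: "S = g -` {y<..} \<inter> {0<..}"
    using \<open>g 0 \<le> y\<close> by (force simp: S_def less_le)
  have "open S"
    unfolding S_eq using cont by (simp add: continuous_on_open_vimage)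
  moreover have S_pos: "\<forall>s\<in>S. 0 < s"
    by (simp add: S_eq)
  ultimately have Inf_notin: "Inf S \<notin> S"
    by (rule Inf_notin_open)
  have "a \<in> S"
    using assms by (simp add: S_def)
  have bdd: "bdd_below S"
    using S_pos by (metis bdd_belowI less_imp_le)
  show "0 \<le> Inf S"
    using \<open>a \<in> S\<close> S_pos by (intro cInf_greatest) (auto intro: less_imp_le)
  show "y < g x \<longleftrightarrow> Inf S < x" if "0 \<le> x" for x
  proof
    assume "y < g x"
    then have "x \<in> S"
      using that by (simp add: S_def)
    then show "Inf S < x"
      using cInf_lower[OF _ bdd] Inf_notin by (metis order_less_le)
  next
    assume "Inf S < x"
    then obtain s where "s \<in> S" "s < x"
      using cInf_lessD[of S x] \<open>a \<in> S\<close> by blast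
    then have "g s \<le> g x"
      using mono by (auto simp: S_def mono_on_def)
    then show "y < g x"
      using \<open>s \<in> S\<close> by (simp add: S_def)
  qed
qed

lemma borel_measurable_mono_on_comp:
  fixes g :: "real \<Rightarrow> real"
  assumes "mono_on A g" "X \<in> borel_measurable M" "\<And>\<omega>. \<omega> \<in> space M \<Longrightarrow> X \<omega> \<in> A"
  shows "(\<lambda>\<omega>. g (X \<omega>)) \<in> borel_measurable M"
proof (rule measurable_compose[OF _ borel_measurable_mono_on_fnc[OF assms(1)]])
  show "X \<in> M \<rightarrow>\<^sub>M restrict_space borel A"
    using assms(2,3) by (intro measurable_restrict_space2) auto
qed

lemma completely_subscalable_comp_superlevel_le:
  fixes g :: "real \<Rightarrow> real"
  assumes "prob_space M" and X_cs: "completely_subscalable M X"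
    and mono: "mono_on {0..} g" and convex: "convex_on {0..} g" and "g 0 = 0"
    and "0 \<le> y" "0 < t" "t < 1"
  shows "t * measure M {\<omega>\<in>space M. g (X \<omega>) > y} \<le> measure M {\<omega>\<in>space M. g (X \<omega>) > y / t}"
proof (cases "\<exists>a\<ge>0. y < g a")
  case False
  then have empty: "{\<omega>\<in>space M. g (X \<omega>) > y} = {}"
    using X_cs by (force simp: completely_subscalable_def)
  show ?thesis
    unfolding empty by simp
next
  case True
  interpret prob_space M by fact
  have X_meas: "X \<in> borel_measurable M" and X_nonneg: "\<And>\<omega>. \<omega> \<in> space M \<Longrightarrow> 0 \<le> X \<omega>"
    using X_cs by (auto simp: completely_subscalable_def)
  have "convex_on {0<..} g"
    by (rule convex_on_subset[OF convex]) (auto simp: convex_real_interval)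
  then have "continuous_on {0<..} g"
    by (intro convex_on_continuous) auto
  then obtain x\<^sub>0 where "0 \<le> x\<^sub>0" and superlevel: "\<And>x. 0 \<le> x \<Longrightarrow> y < g x \<longleftrightarrow> x\<^sub>0 < x"
    using mono_on_superlevel_set_eq_greaterThan[OF mono] True \<open>g 0 = 0\<close> \<open>0 \<le> y\<close> by metis
  have "{\<omega>\<in>space M. X \<omega> > x\<^sub>0 / t} \<subseteq> {\<omega>\<in>space M. g (X \<omega>) > y / t}"
  proof safe
    fix \<omega> assume "\<omega> \<in> space M" "x\<^sub>0 / t < X \<omega>"
    then have "y < g (t * X \<omega>)"
      using superlevel X_nonneg \<open>0 < t\<close> by (simp add: field_simps)
    also have "\<dots> \<le> t * g (X \<omega>)"
      using convex_on_nonneg_scale_le[OF convex] X_nonneg \<open>\<omega> \<in> space M\<close> \<open>g 0 = 0\<close> \<open>0 < t\<close> \<open>t < 1\<close>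
      by simp
    finally show "y / t < g (X \<omega>)"
      using \<open>0 < t\<close> by (simp add: field_simps)
  qed
  moreover have "(\<lambda>\<omega>. g (X \<omega>)) \<in> borel_measurable M"
    using borel_measurable_mono_on_comp[OF mono X_meas] X_nonneg by simp
  ultimately have "prob {\<omega>\<in>space M. X \<omega> > x\<^sub>0 / t} \<le> prob {\<omega>\<in>space M. g (X \<omega>) > y / t}"
    by (intro finite_measure_mono) measurable
  moreover have "{\<omega>\<in>space M. g (X \<omega>) > y} = {\<omega>\<in>space M. X \<omega> > x\<^sub>0}"
    using superlevel X_nonneg by blast
  moreover have "t * prob {\<omega>\<in>space M. X \<omega> > x\<^sub>0} \<le> prob {\<omega>\<in>space M. X \<omega> > x\<^sub>0 / t}"
    using X_cs \<open>0 \<le> x\<^sub>0\<close> \<open>0 < t\<close> \<open>t < 1\<close> by (simp add: completely_subscalable_def)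
  ultimately show ?thesis
    by simp
qed

theorem lemma8:
  fixes M :: "'a measure" and X :: "'a \<Rightarrow> real" and g :: "real \<Rightarrow> real"
  assumes "prob_space M"
    and "completely_subscalable M X"
    and "\<forall>x\<ge>0. 0 \<le> g x"
    and "mono_on {0..} g"
    and "convex_on {0..} g"
    and "g 0 = 0"
  shows "completely_subscalable M (\<lambda>\<omega>. g (X \<omega>))"
proof -
  have X_meas: "X \<in> borel_measurable M" and X_nonneg: "\<And>\<omega>. \<omega> \<in> space M \<Longrightarrow> 0 \<le> X \<omega>"
    using assms(2) by (auto simp: completely_subscalable_def)
  have "(\<lambda>\<omega>. g (X \<omega>)) \<in> borel_measurable M"
    using borel_measurable_mono_on_comp[OF assms(4) X_meas] X_nonneg by simp
  then show ?thesis
    unfolding completely_subscalable_def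
    using X_nonneg assms(3) completely_subscalable_comp_superlevel_le[OF assms(1,2,4,5,6)] by auto
qed

end
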